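(* For all positive integers $n$ and $k$ with $k\geq 2$, and every function $\sigma\colon E(K_{4n})\to\{-1,1\}$ with $\left|\sigma\left(E(K_{4n})\right)\right|< n(n-1)+k(6n-1)+k^2$, there is a perfect matching $M$ in $K_{4n}$ with $|\sigma(M)|\leq 2k-2$.
   Context: $K_{4n}$ denotes the complete graph on $4n$ vertices and $E(K_{4n})$ its edge set. For a set $F$ of edges, $\sigma(F)=\sum_{e\in F}\sigma(e)$. *)

theory Defs
  imports Main
begin

definition complete_edges :: "nat \<Rightarrow> nat set set" where
  "complete_edges m = {e. e \<subseteq> {0..<m} \<and> card e = 2}"

definition perfect_matching :: "nat \<Rightarrow> nat set set \<Rightarrow> bool" where
  "perfect_matching m M \<longleftrightarrow>
     M \<subseteq> complete_edges m \<and>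
     (\<forall>e\<in>M. \<forall>f\<in>M. e \<noteq> f \<longrightarrow> e \<inter> f = {}) \<and>
     (\<forall>v\<in>{0..<m}. \<exists>e\<in>M. v \<in> e)"

end

theory Submission
  imports Defs
begin

text \<open>A perfect matching of \<open>K\<^sub>N\<close> is encoded as a fixed-point-free involution \<open>p\<close> of
  \<open>{..<N}\<close>; let \<open>s(p)\<close> count the vertices whose matching edge is negative, so that
  \<open>\<sigma>(M) = N/2 - s(p)\<close> and \<open>s(p)\<close> is even. Exchanging two matching edges \<open>{a, p a}, {b, p b}\<close>
  for \<open>{a, b}, {p a, p b}\<close> changes \<open>s\<close> by at most 4, and \<open>p\<close> is called locally maximal if no
  matching raises \<open>s\<close> by at most 4. Such a matching admits no negative alternating path of
  length 1, 3 or 5 joining positively matched vertices, and counting the negative edges this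
  still allows bounds \<open>\<sigma>(E(K\<^sub>N))\<close> from below by a decreasing function of \<open>s(p)\<close>. Under the
  hypothesis, every locally maximal matching therefore has \<open>s(p) > 2(n - k)\<close>, both for \<open>\<sigma>\<close> and
  for \<open>-\<sigma>\<close>. Applied to \<open>-\<sigma>\<close> this gives a matching with \<open>s(p) < 2n + 2k\<close>; a matching maximising
  \<open>s\<close> below that threshold is locally maximal, hence \<open>2(n - k) < s(p) < 2n + 2k\<close>, and by parity
  \<open>|\<sigma>(M)| = |2n - s(p)| \<le> 2k - 2\<close>.\<close>

section \<open>Perfect matchings as involutions\<close>

definition matching_involution :: "nat \<Rightarrow> (nat \<Rightarrow> nat) \<Rightarrow> bool" where
  "matching_involution N p \<longleftrightarrow> (\<forall>x<N. p x < N \<and> p x \<noteq> x \<and> p (p x) = x)"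

definition matching_of :: "nat \<Rightarrow> (nat \<Rightarrow> nat) \<Rightarrow> nat set set" where
  "matching_of N p = (\<lambda>x. {x, p x}) ` {..<N}"

lemma matching_involutionD:
  assumes "matching_involution N p" and "x < N"
  shows "p x < N" and "p x \<noteq> x" and "p (p x) = x"
  using assms unfolding matching_involution_def by auto

lemma matching_involution_exists:
  assumes "even N"
  shows "\<exists>p. matching_involution N p"
proof
  show "matching_involution N (\<lambda>x. if even x then x + 1 else x - 1)"
    unfolding matching_involution_def using assms
    by (auto elim: oddE) (metis Suc_lessI even_Suc)
qed

lemma doubleton_in_complete_edges:
  "x < N \<Longrightarrow> y < N \<Longrightarrow> x \<noteq> y \<Longrightarrow> {x, y} \<in> complete_edges N"
  unfolding complete_edges_def by auto

lemma finite_complete_edges: "finite (complete_edges N)"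
  by (rule finite_subset[of _ "Pow {0..<N}"]) (auto simp: complete_edges_def)

lemma sum_two_to_one:
  fixes g :: "'b \<Rightarrow> 'c::comm_semiring_1"
  assumes "finite S" and "finite T" and "f ` S \<subseteq> T"
    and "\<And>t. t \<in> T \<Longrightarrow> card {z\<in>S. f z = t} = 2"
  shows "(\<Sum>z\<in>S. g (f z)) = 2 * (\<Sum>t\<in>T. g t)"
proof -
  have "(\<Sum>z\<in>S. g (f z)) = (\<Sum>t\<in>T. \<Sum>z\<in>{z\<in>S. f z = t}. g (f z))"
    by (rule sum.group[OF assms(1-3), symmetric])
  also have "\<dots> = (\<Sum>t\<in>T. \<Sum>z\<in>{z\<in>S. f z = t}. g t)"
    by (intro sum.cong) auto
  also have "\<dots> = (\<Sum>t\<in>T. 2 * g t)"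
    using assms(4) by simp
  finally show ?thesis by (simp add: sum_distrib_left)
qed

lemma perfect_matching_matching_of:
  assumes p: "matching_involution N p"
  shows "perfect_matching N (matching_of N p)"
  unfolding perfect_matching_def
proof (intro conjI ballI impI)
  show "matching_of N p \<subseteq> complete_edges N"
    using matching_involutionD[OF p] unfolding matching_of_def
    by (auto intro!: doubleton_in_complete_edges) metis
next
  fix e f assume "e \<in> matching_of N p" "f \<in> matching_of N p" "e \<noteq> f"
  then obtain x y where "x < N" "e = {x, p x}" "y < N" "f = {y, p y}"
    unfolding matching_of_def by auto
  with \<open>e \<noteq> f\<close> show "e \<inter> f = {}"
    using matching_involutionD(3)[OF p] by (auto simp: insert_commute) metis+
next
  fix v assume "v \<in> {0..<N}"
  then show "\<exists>e\<in>matching_of N p. v \<in> e" unfolding matching_of_def by auto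
qed

lemma sum_matching_of:
  fixes g :: "nat set \<Rightarrow> 'a::comm_semiring_1"
  assumes p: "matching_involution N p"
  shows "(\<Sum>x<N. g {x, p x}) = 2 * (\<Sum>e\<in>matching_of N p. g e)"
proof (rule sum_two_to_one)
  fix e assume "e \<in> matching_of N p"
  then obtain a where a: "a < N" "e = {a, p a}" unfolding matching_of_def by auto
  then have "{x \<in> {..<N}. {x, p x} = e} = {a, p a}"
    using matching_involutionD[OF p] by (auto simp: doubleton_eq_iff)
  then show "card {x \<in> {..<N}. {x, p x} = e} = 2"
    using matching_involutionD(2)[OF p a(1)] by simp
qed (simp_all add: matching_of_def)

definition neg_edge :: "(nat set \<Rightarrow> int) \<Rightarrow> nat \<Rightarrow> nat \<Rightarrow> bool" where
  "neg_edge \<sigma> x y \<longleftrightarrow> x \<noteq> y \<and> \<sigma> {x, y} = -1"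

definition neg_degree :: "(nat set \<Rightarrow> int) \<Rightarrow> nat set \<Rightarrow> nat \<Rightarrow> int" where
  "neg_degree \<sigma> S x = (\<Sum>y\<in>S. of_bool (neg_edge \<sigma> x y))"

definition neg_matched :: "(nat set \<Rightarrow> int) \<Rightarrow> nat \<Rightarrow> (nat \<Rightarrow> nat) \<Rightarrow> nat set" where
  "neg_matched \<sigma> N p = {x. x < N \<and> neg_edge \<sigma> x (p x)}"

definition pos_matched :: "(nat set \<Rightarrow> int) \<Rightarrow> nat \<Rightarrow> (nat \<Rightarrow> nat) \<Rightarrow> nat set" where
  "pos_matched \<sigma> N p = {x. x < N \<and> \<not> neg_edge \<sigma> x (p x)}"

definition neg_count :: "(nat set \<Rightarrow> int) \<Rightarrow> nat \<Rightarrow> (nat \<Rightarrow> nat) \<Rightarrow> nat" where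
  "neg_count \<sigma> N p = card (neg_matched \<sigma> N p)"

lemma neg_edge_sym: "neg_edge \<sigma> x y \<longleftrightarrow> neg_edge \<sigma> y x"
  unfolding neg_edge_def by (auto simp: insert_commute)

lemma neg_edge_irrefl [simp]: "\<not> neg_edge \<sigma> x x"
  unfolding neg_edge_def by simp

lemma sign_doubleton:
  assumes "\<forall>e\<in>complete_edges N. \<sigma> e \<in> {-1, 1}" and "x < N" "y < N" "x \<noteq> y"
  shows "\<sigma> {x, y} = 1 - 2 * of_bool (neg_edge \<sigma> x y)"
  using assms doubleton_in_complete_edges[of x N y] unfolding neg_edge_def by auto

lemma sign_matching_edge:
  assumes "\<forall>e\<in>complete_edges N. \<sigma> e \<in> {-1, 1}" and "matching_involution N p" and "x < N"
  shows "\<sigma> {x, p x} = 1 - 2 * of_bool (neg_edge \<sigma> x (p x))"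
  using matching_involutionD[OF assms(2,3)] by (intro sign_doubleton[OF assms(1,3)]) auto

lemma sum_neg_degree_swap:
  "(\<Sum>x\<in>S. neg_degree \<sigma> T x) = (\<Sum>y\<in>T. neg_degree \<sigma> S y)"
  unfolding neg_degree_def by (subst sum.swap) (simp add: neg_edge_sym)

lemma neg_degree_nonneg: "neg_degree \<sigma> S x \<ge> 0"
  unfolding neg_degree_def by (simp add: sum_nonneg)

lemma neg_degree_le_card: "neg_degree \<sigma> S x \<le> int (card S)"
  unfolding neg_degree_def using sum_bounded_above[of S "\<lambda>y. of_bool (neg_edge \<sigma> x y) :: int" 1]
  by (simp del: sum_of_bool_eq)

lemma neg_degree_ge_1:
  assumes "neg_degree \<sigma> S x \<ge> 1"
  obtains y where "y \<in> S" "neg_edge \<sigma> x y"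
proof -
  from assms have "neg_degree \<sigma> S x \<noteq> 0" by simp
  then obtain y where "y \<in> S" "of_bool (neg_edge \<sigma> x y) \<noteq> (0::int)"
    unfolding neg_degree_def by (meson sum.not_neutral_contains_not_neutral)
  with that show ?thesis by simp
qed

lemma neg_degree_ge_2:
  assumes "neg_degree \<sigma> S x \<ge> 2"
  obtains y where "y \<in> S" "neg_edge \<sigma> x y" "y \<noteq> z"
proof -
  have "finite S"
    using assms unfolding neg_degree_def by (metis not_numeral_le_zero sum.infinite)
  have "\<not> {y\<in>S. neg_edge \<sigma> x y} \<subseteq> {z}"
  proof
    assume "{y\<in>S. neg_edge \<sigma> x y} \<subseteq> {z}"
    then have "card {y\<in>S. neg_edge \<sigma> x y} \<le> 1"
      using card_mono[of "{z}"] by fastforce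
    with assms \<open>finite S\<close> show False
      unfolding neg_degree_def by (simp add: Int_def conj_commute)
  qed
  with that show ?thesis by blast
qed

lemma neg_count_eq_sum:
  "int (neg_count \<sigma> N p) = (\<Sum>x<N. of_bool (neg_edge \<sigma> x (p x)))"
  unfolding neg_count_def neg_matched_def by (simp add: Int_def lessThan_def)

lemma neg_count_le: "neg_count \<sigma> N p \<le> N"
proof -
  have "neg_matched \<sigma> N p \<subseteq> {..<N}" unfolding neg_matched_def by auto
  then show ?thesis unfolding neg_count_def by (metis card_lessThan card_mono finite_lessThan)
qed

lemma card_neg_matched_pos_matched:
  "card (neg_matched \<sigma> N p) + card (pos_matched \<sigma> N p) = N"
proof -
  have "neg_matched \<sigma> N p \<union> pos_matched \<sigma> N p = {..<N}"
    "neg_matched \<sigma> N p \<inter> pos_matched \<sigma> N p = {}"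
    unfolding neg_matched_def pos_matched_def by auto
  then show ?thesis
    using card_Un_disjoint[of "neg_matched \<sigma> N p" "pos_matched \<sigma> N p"]
    by (simp add: neg_matched_def pos_matched_def)
qed

lemma neg_count_uminus:
  assumes "\<forall>e\<in>complete_edges N. \<sigma> e \<in> {-1, 1}" and "matching_involution N p"
  shows "neg_count \<sigma> N p + neg_count (\<lambda>e. - \<sigma> e) N p = N"
proof -
  have "neg_matched (\<lambda>e. - \<sigma> e) N p = pos_matched \<sigma> N p"
    using sign_matching_edge[OF assms] matching_involutionD(2)[OF assms(2)]
    unfolding neg_matched_def pos_matched_def neg_edge_def by force
  then show ?thesis
    using card_neg_matched_pos_matched[of \<sigma> N p] unfolding neg_count_def by simp
qed

lemma even_neg_count:
  assumes "matching_involution N p"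
  shows "even (neg_count \<sigma> N p)"
proof -
  have "int (neg_count \<sigma> N p) = (\<Sum>x<N. of_bool (\<sigma> {x, p x} = -1))"
    unfolding neg_count_eq_sum neg_edge_def
    using matching_involutionD(2)[OF assms] by (intro sum.cong refl) (auto, metis)
  also have "\<dots> = 2 * (\<Sum>e\<in>matching_of N p. of_bool (\<sigma> e = -1))"
    by (rule sum_matching_of[OF assms])
  finally show ?thesis by presburger
qed

lemma sum_matching_of_sign:
  assumes "\<forall>e\<in>complete_edges N. \<sigma> e \<in> {-1, 1}" and p: "matching_involution N p"
  shows "2 * (\<Sum>e\<in>matching_of N p. \<sigma> e) = int N - 2 * int (neg_count \<sigma> N p)"
proof -
  have "2 * (\<Sum>e\<in>matching_of N p. \<sigma> e) = (\<Sum>x<N. 1 - 2 * of_bool (neg_edge \<sigma> x (p x)))"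
    unfolding sum_matching_of[OF p, symmetric]
    using sign_matching_edge[OF assms] by (intro sum.cong refl) auto
  also have "\<dots> = int N - 2 * int (neg_count \<sigma> N p)"
    by (simp add: neg_count_eq_sum sum_subtractf sum_distrib_left del: sum_of_bool_eq)
  finally show ?thesis .
qed

lemma sum_complete_edges:
  assumes signs: "\<forall>e\<in>complete_edges N. \<sigma> e \<in> {-1, 1}"
  shows "2 * (\<Sum>e\<in>complete_edges N. \<sigma> e)
     = int N * (int N - 1) - 2 * (\<Sum>x<N. neg_degree \<sigma> {..<N} x)"
proof -
  define S where "S = Sigma {..<N} (\<lambda>x. {..<N} - {x})"
  have fibre: "card {z\<in>S. (\<lambda>(x, y). {x, y}) z = e} = 2" if e: "e \<in> complete_edges N" for e
  proof -
    obtain a b where ab: "e = {a, b}" "a \<noteq> b"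
      using e unfolding complete_edges_def by (auto simp: card_2_iff)
    moreover have "a < N" "b < N"
      using e ab unfolding complete_edges_def by auto
    ultimately have "{z\<in>S. (\<lambda>(x, y). {x, y}) z = e} = {(a, b), (b, a)}"
      unfolding S_def by (auto simp: doubleton_eq_iff)
    with ab show ?thesis by simp
  qed
  have "2 * (\<Sum>e\<in>complete_edges N. \<sigma> e) = (\<Sum>z\<in>S. \<sigma> ((\<lambda>(x, y). {x, y}) z))"
    by (rule sum_two_to_one[symmetric, OF _ finite_complete_edges _ fibre])
      (auto simp: S_def intro: doubleton_in_complete_edges)
  also have "\<dots> = (\<Sum>x<N. \<Sum>y\<in>{..<N} - {x}. \<sigma> {x, y})"
    unfolding S_def by (simp add: sum.Sigma split_def)
  also have "\<dots> = (\<Sum>x<N. \<Sum>y\<in>{..<N} - {x}. 1 - 2 * of_bool (neg_edge \<sigma> x y))"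
    using sign_doubleton[OF signs] by (intro sum.cong refl) auto
  also have "\<dots> = (\<Sum>x<N. (int N - 1) - 2 * neg_degree \<sigma> {..<N} x)"
  proof (intro sum.cong refl)
    fix x assume "x \<in> {..<N}"
    moreover have "neg_degree \<sigma> ({..<N} - {x}) x = neg_degree \<sigma> {..<N} x"
      unfolding neg_degree_def by (rule sum.mono_neutral_left) auto
    moreover have "(\<Sum>y\<in>{..<N} - {x}. 1 - 2 * of_bool (neg_edge \<sigma> x y))
        = int (card ({..<N} - {x})) - 2 * neg_degree \<sigma> ({..<N} - {x}) x"
      unfolding neg_degree_def by (simp add: sum_subtractf sum_distrib_left del: sum_of_bool_eq)
    ultimately show "(\<Sum>y\<in>{..<N} - {x}. 1 - 2 * of_bool (neg_edge \<sigma> x y))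
        = (int N - 1) - 2 * neg_degree \<sigma> {..<N} x"
      by simp
  qed
  also have "\<dots> = int N * (int N - 1) - 2 * (\<Sum>x<N. neg_degree \<sigma> {..<N} x)"
    by (simp add: sum_subtractf sum_distrib_left)
  finally show ?thesis .
qed

section \<open>Swaps and locally maximal matchings\<close>

definition swap :: "(nat \<Rightarrow> nat) \<Rightarrow> nat \<Rightarrow> nat \<Rightarrow> nat \<Rightarrow> nat" where
  "swap p a b = (\<lambda>x. if x = a then b else if x = b then a else if x = p a then p b
      else if x = p b then p a else p x)"

lemma swap_apply:
  assumes p: "matching_involution N p" and "a < N" "b < N" "a \<noteq> b" "b \<noteq> p a"
  shows "swap p a b a = b" "swap p a b b = a" "swap p a b (p a) = p b" "swap p a b (p b) = p a"
    and "x \<notin> {a, b, p a, p b} \<Longrightarrow> swap p a b x = p x"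
proof -
  note pa = matching_involutionD[OF p \<open>a < N\<close>] and pb = matching_involutionD[OF p \<open>b < N\<close>]
  have "a \<noteq> p b" "p a \<noteq> p b"
    using assms(4,5) pa(3) pb(3) by metis+
  with assms(4,5) pa(2) pb(2)
  show "swap p a b a = b" "swap p a b b = a" "swap p a b (p a) = p b" "swap p a b (p b) = p a"
    unfolding swap_def by auto
qed (auto simp: swap_def)

lemma matching_involution_swap:
  assumes p: "matching_involution N p" and "a < N" "b < N" "a \<noteq> b" "b \<noteq> p a"
  shows "matching_involution N (swap p a b)"
  unfolding matching_involution_def
proof (intro allI impI)
  fix x assume x: "x < N"
  note pa = matching_involutionD[OF p \<open>a < N\<close>] and pb = matching_involutionD[OF p \<open>b < N\<close>]
    and px = matching_involutionD[OF p x]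
  show "swap p a b x < N \<and> swap p a b x \<noteq> x \<and> swap p a b (swap p a b x) = x"
  proof (cases "x \<in> {a, b, p a, p b}")
    case True
    then show ?thesis using assms pa pb swap_apply(1-4)[OF assms] by auto
  next
    case False
    then have "p x \<notin> {a, b, p a, p b}"
      using px(3) pa(3) pb(3) by auto
    with False show ?thesis using swap_apply(5)[OF assms] px by simp
  qed
qed

lemma neg_count_swap:
  assumes p: "matching_involution N p" and "a < N" "b < N" "a \<noteq> b" "b \<noteq> p a"
  shows "int (neg_count \<sigma> N (swap p a b))
        + 2 * (of_bool (neg_edge \<sigma> a (p a)) + of_bool (neg_edge \<sigma> b (p b)))
      = int (neg_count \<sigma> N p)
        + 2 * (of_bool (neg_edge \<sigma> a b) + of_bool (neg_edge \<sigma> (p a) (p b)))"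
proof -
  note pa = matching_involutionD[OF p \<open>a < N\<close>] and pb = matching_involutionD[OF p \<open>b < N\<close>]
  have distinct: "a \<noteq> p b" "p a \<noteq> p b"
    using assms(4,5) pa(3) pb(3) by metis+
  define F where "F = {a, b, p a, p b}"
  define h where "h x y = (of_bool (neg_edge \<sigma> x y) :: int)" for x y
  have F_sub: "F \<subseteq> {..<N}" using assms pa pb unfolding F_def by auto
  have split: "int (neg_count \<sigma> N q) = (\<Sum>x\<in>{..<N} - F. h x (q x)) + (\<Sum>x\<in>F. h x (q x))" for q
    unfolding neg_count_eq_sum h_def by (rule sum.subset_diff[OF F_sub finite_lessThan])
  have "(\<Sum>x\<in>{..<N} - F. h x (swap p a b x)) = (\<Sum>x\<in>{..<N} - F. h x (p x))"
    using swap_apply(5)[OF assms] unfolding F_def by (intro sum.cong) auto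
  moreover have "(\<Sum>x\<in>F. h x (swap p a b x)) = 2 * h a b + 2 * h (p a) (p b)"
    and "(\<Sum>x\<in>F. h x (p x)) = 2 * h a (p a) + 2 * h b (p b)"
    unfolding F_def h_def using assms pa pb distinct
    by (simp_all add: swap_apply(1-4)[OF assms] neg_edge_sym[of \<sigma> b a]
      neg_edge_sym[of \<sigma> "p b" "p a"] neg_edge_sym[of \<sigma> "p a" a] neg_edge_sym[of \<sigma> "p b" b])
  ultimately show ?thesis
    using split[of "swap p a b"] split[of p] unfolding h_def by simp
qed

text \<open>Only gains of at most 4, the most a single swap can gain, are excluded; this is what a
  maximiser of \<open>neg_count\<close> among matchings below a threshold still satisfies.\<close>
definition locally_max :: "(nat set \<Rightarrow> int) \<Rightarrow> nat \<Rightarrow> (nat \<Rightarrow> nat) \<Rightarrow> bool" where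
  "locally_max \<sigma> N p \<longleftrightarrow> (\<forall>q. matching_involution N q \<longrightarrow>
     neg_count \<sigma> N q \<le> neg_count \<sigma> N p + 4 \<longrightarrow> neg_count \<sigma> N q \<le> neg_count \<sigma> N p)"

locale locally_max_matching =
  fixes \<sigma> :: "nat set \<Rightarrow> int" and N :: nat and p :: "nat \<Rightarrow> nat"
  assumes involution: "matching_involution N p"
    and locally_max: "locally_max \<sigma> N p"
begin

abbreviation "W \<equiv> neg_matched \<sigma> N p"
abbreviation "U \<equiv> pos_matched \<sigma> N p"

lemma W_iff: "x \<in> W \<longleftrightarrow> x < N \<and> neg_edge \<sigma> x (p x)"
  unfolding neg_matched_def by simp

lemma U_iff: "x \<in> U \<longleftrightarrow> x < N \<and> \<not> neg_edge \<sigma> x (p x)"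
  unfolding pos_matched_def by simp

lemma partner:
  assumes "x < N"
  shows "p x < N" and "p x \<noteq> x" and "p (p x) = x"
  using matching_involutionD[OF involution assms] .

lemma partner_in_W:
  assumes "x \<in> W"
  shows "p x \<in> W" and "p x \<noteq> x" and "p (p x) = x"
  using assms partner[of x] neg_edge_sym[of \<sigma> x "p x"] unfolding W_iff by auto

lemma partner_in_U: "x \<in> U \<Longrightarrow> p x \<in> U"
  using partner[of x] neg_edge_sym[of \<sigma> x "p x"] unfolding U_iff by auto

lemma swap_gain_le:
  assumes "a < N" "b < N" "a \<noteq> b" "b \<noteq> p a"
  shows "of_bool (neg_edge \<sigma> a b) + of_bool (neg_edge \<sigma> (p a) (p b))
       \<le> (of_bool (neg_edge \<sigma> a (p a)) + of_bool (neg_edge \<sigma> b (p b)) :: int)"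
proof (rule ccontr)
  let ?q = "swap p a b"
  assume "\<not> ?thesis"
  with neg_count_swap[OF involution assms, of \<sigma>]
  have "neg_count \<sigma> N p < neg_count \<sigma> N ?q" "neg_count \<sigma> N ?q \<le> neg_count \<sigma> N p + 4"
    by (auto split: split_of_bool_asm)
  with locally_max matching_involution_swap[OF involution assms] show False
    unfolding locally_max_def by force
qed

lemma swap_locally_max_matching:
  assumes "a < N" "b < N" "a \<noteq> b" "b \<noteq> p a"
    and "of_bool (neg_edge \<sigma> a b) + of_bool (neg_edge \<sigma> (p a) (p b))
       = (of_bool (neg_edge \<sigma> a (p a)) + of_bool (neg_edge \<sigma> b (p b)) :: int)"
  shows "locally_max_matching \<sigma> N (swap p a b)"
proof
  show "matching_involution N (swap p a b)"
    by (rule matching_involution_swap[OF involution assms(1-4)])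
  have "neg_count \<sigma> N (swap p a b) = neg_count \<sigma> N p"
    using neg_count_swap[OF involution assms(1-4), of \<sigma>] assms(5) by simp
  with locally_max show "locally_max \<sigma> N (swap p a b)"
    unfolding locally_max_def by simp
qed

lemma no_neg_edge_in_U:
  assumes "u \<in> U" "w \<in> U"
  shows "\<not> neg_edge \<sigma> u w"
proof
  assume uw: "neg_edge \<sigma> u w"
  then have "u \<noteq> w" "w \<noteq> p u" using assms unfolding pos_matched_def by auto
  with swap_gain_le[of u w] assms uw show False
    unfolding pos_matched_def by (simp split: split_of_bool_asm)
qed

text \<open>Swapping \<open>{u, p u}, {x, p x}\<close> for \<open>{u, x}, {p u, p x}\<close> keeps the count and makes
  \<open>p x\<close> positively matched, so a negative edge out of \<open>p x\<close> into \<open>U\<close> shortens the path.\<close>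
lemma swap_along_path:
  assumes x: "x \<in> W" and u: "u \<in> U" and ux: "neg_edge \<sigma> u x"
  shows "\<not> neg_edge \<sigma> (p u) (p x)"
    and "locally_max_matching \<sigma> N (swap p u x)"
    and "p x \<in> pos_matched \<sigma> N (swap p u x)"
proof -
  have "u < N" "x < N" "u \<noteq> x"
    using x u ux unfolding W_iff U_iff by auto
  have "x \<noteq> p u"
    using x u partner(3)[OF \<open>u < N\<close>] neg_edge_sym[of \<sigma> u "p u"] unfolding W_iff U_iff by auto
  note gain = swap_gain_le[OF \<open>u < N\<close> \<open>x < N\<close> \<open>u \<noteq> x\<close> \<open>x \<noteq> p u\<close>]
  show not_pp: "\<not> neg_edge \<sigma> (p u) (p x)"
    using gain x u ux unfolding W_iff U_iff by (auto split: split_of_bool_asm)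
  show "locally_max_matching \<sigma> N (swap p u x)"
    using gain x u ux not_pp neg_edge_sym[of \<sigma> "p u" "p x"] unfolding W_iff U_iff
    by (intro swap_locally_max_matching) (auto simp: \<open>u \<noteq> x\<close> \<open>x \<noteq> p u\<close>)
  have "p x \<noteq> u" "p x \<noteq> p u"
    using \<open>x \<noteq> p u\<close> \<open>u \<noteq> x\<close> partner(3)[OF \<open>x < N\<close>] partner(3)[OF \<open>u < N\<close>] by metis+
  then have "swap p u x (p x) = p u"
    using partner(2)[OF \<open>x < N\<close>] unfolding swap_def by simp
  then show "p x \<in> pos_matched \<sigma> N (swap p u x)"
    using not_pp partner(1)[OF \<open>x < N\<close>] neg_edge_sym[of \<sigma> "p u" "p x"]
    unfolding pos_matched_def by simp
qed

lemma no_augmenting_path_3: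
  assumes "x \<in> W" "u \<in> U" "w \<in> U" "u \<noteq> w"
    and "neg_edge \<sigma> u x" "neg_edge \<sigma> (p x) w"
  shows False
proof -
  interpret q: locally_max_matching \<sigma> N "swap p u x"
    by (rule swap_along_path(2)[OF assms(1,2,5)])
  have "w \<noteq> p u" "w \<noteq> x" "w \<noteq> p x"
    using assms swap_along_path(1)[OF assms(1,2,5)] neg_edge_sym[of \<sigma> "p x" "p u"]
    unfolding W_iff U_iff by auto
  then have "w \<in> pos_matched \<sigma> N (swap p u x)"
    using assms(3,4) unfolding pos_matched_def swap_def by auto
  with swap_along_path(3)[OF assms(1,2,5)] q.no_neg_edge_in_U assms(6) show False
    by blast
qed

lemma no_augmenting_path_5:
  assumes "x \<in> W" "y \<in> W" "y \<noteq> x" "y \<noteq> p x" "u \<in> U" "w \<in> U" "u \<noteq> w"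
    and "neg_edge \<sigma> u x" "neg_edge \<sigma> (p x) (p y)" "neg_edge \<sigma> y w"
  shows False
proof -
  let ?q = "swap p u x"
  interpret q: locally_max_matching \<sigma> N ?q
    by (rule swap_along_path(2)[OF assms(1,5,8)])
  have x: "x < N" "p x \<noteq> x" "p (p x) = x" and y: "y < N" "p y \<noteq> y" "p (p y) = y"
    and u: "u < N" "p u \<noteq> u" "p (p u) = u"
    using assms(1,2,5) partner unfolding W_iff U_iff by auto
  have "p x \<in> W" "p y \<in> W" "p u \<in> U"
    using assms(1,2,5) partner_in_W partner_in_U by auto
  then have "x \<noteq> p u" "y \<noteq> p u" "y \<noteq> u" "w \<noteq> x" "w \<noteq> p x"
    using assms(1,2,5,6) unfolding W_iff U_iff by auto
  have qy: "?q (p y) = y"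
    using \<open>y \<noteq> p u\<close> \<open>y \<noteq> u\<close> assms(3,4) x(3) y(3) u(3) unfolding swap_def by metis
  with \<open>p y \<in> W\<close> have "p y \<in> q.W"
    using y(3) unfolding W_iff neg_matched_def by auto
  moreover have "w \<in> q.U"
  proof (cases "w = p u")
    case True
    then have "?q w = p x" using \<open>x \<noteq> p u\<close> u(2) unfolding swap_def by auto
    with True swap_along_path(1)[OF assms(1,5,8)] assms(6) show ?thesis
      unfolding U_iff pos_matched_def by simp
  next
    case False
    with \<open>w \<noteq> x\<close> \<open>w \<noteq> p x\<close> assms(6,7) show ?thesis
      unfolding pos_matched_def swap_def by auto
  qed
  moreover have "p x \<noteq> w"
    using \<open>w \<noteq> p x\<close> by simp
  ultimately show False
    using q.no_augmenting_path_3[of "p y" "p x" w] swap_along_path(3)[OF assms(1,5,8)]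
      qy assms(9,10) neg_edge_sym[of \<sigma> "p y" "p x"] by simp
qed

subsection \<open>Counting negative edges\<close>

abbreviation degU :: "nat \<Rightarrow> int" where
  "degU x \<equiv> neg_degree \<sigma> U x"

definition low_pair :: "nat \<Rightarrow> bool" where
  "low_pair x \<longleftrightarrow> degU x \<le> 1 \<and> degU (p x) \<le> 1"

definition neg_between :: "nat \<Rightarrow> nat \<Rightarrow> int" where
  "neg_between x y = of_bool (neg_edge \<sigma> x y) + of_bool (neg_edge \<sigma> x (p y))
     + of_bool (neg_edge \<sigma> (p x) y) + of_bool (neg_edge \<sigma> (p x) (p y))"

lemma finite_W: "finite W" and finite_U: "finite U"
  unfolding neg_matched_def pos_matched_def by auto

lemma W_Un_U: "W \<union> U = {..<N}" and W_Int_U: "W \<inter> U = {}"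
  unfolding neg_matched_def pos_matched_def by auto

lemma sum_lessThan_W_U: "(\<Sum>x<N. f x) = (\<Sum>x\<in>W. f x) + (\<Sum>x\<in>U. f x)"
  using sum.union_disjoint[OF finite_W finite_U W_Int_U, of f] W_Un_U by simp

lemma degU_partner_zero:
  assumes "x \<in> W" and "degU x \<ge> 2"
  shows "degU (p x) = 0"
proof (rule ccontr)
  assume "degU (p x) \<noteq> 0"
  then have "degU (p x) \<ge> 1" using neg_degree_nonneg[of \<sigma> U "p x"] by linarith
  then obtain w where "w \<in> U" "neg_edge \<sigma> (p x) w" by (rule neg_degree_ge_1)
  moreover obtain u where "u \<in> U" "neg_edge \<sigma> x u" "u \<noteq> w"
    using assms(2) by (rule neg_degree_ge_2)
  ultimately show False
    using no_augmenting_path_3[OF assms(1)] neg_edge_sym[of \<sigma> x u] by blast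
qed

lemma no_neg_edge_between_partners:
  assumes "x \<in> W" "y \<in> W" "y \<noteq> x" "y \<noteq> p x" and "degU x \<ge> 2" "degU y \<ge> 1"
  shows "\<not> neg_edge \<sigma> (p x) (p y)"
proof
  assume "neg_edge \<sigma> (p x) (p y)"
  moreover obtain w where "w \<in> U" "neg_edge \<sigma> y w"
    using assms(6) by (rule neg_degree_ge_1)
  moreover obtain u where "u \<in> U" "neg_edge \<sigma> x u" "u \<noteq> w"
    using assms(5) by (rule neg_degree_ge_2)
  ultimately show False
    using no_augmenting_path_5[OF assms(1-4)] neg_edge_sym[of \<sigma> x u] by blast
qed

lemma degU_pair_le:
  assumes "x \<in> W"
  shows "degU x + degU (p x) \<le> int (card U) - of_bool (low_pair x) * (int (card U) - 2)"
proof (cases "low_pair x")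
  case True
  then show ?thesis unfolding low_pair_def by simp
next
  case False
  then have "degU x \<ge> 2 \<or> degU (p x) \<ge> 2" unfolding low_pair_def by auto
  moreover have "p (p x) = x" "p x \<in> W"
    using partner_in_W[OF assms] by auto
  ultimately have "degU x = 0 \<or> degU (p x) = 0"
    using degU_partner_zero assms by metis
  with False show ?thesis
    using neg_degree_le_card[of \<sigma> U x] neg_degree_le_card[of \<sigma> U "p x"] by auto
qed

lemma neg_between_le:
  assumes x: "x \<in> W" and y: "y \<in> W" "y \<noteq> x" "y \<noteq> p x"
  shows "neg_between x y \<le> 3 + of_bool (low_pair x) + of_bool (low_pair y)"
proof (cases "low_pair x \<or> low_pair y")
  case True
  then show ?thesis unfolding neg_between_def by auto
next
  case False
  have px: "p x \<in> W" "p (p x) = x" and py: "p y \<in> W" "p (p y) = y"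
    using partner_in_W x y by auto
  have "p y \<noteq> x" "p y \<noteq> p x" "p x \<noteq> y"
    using y px(2) py(2) by metis+
  from False have "degU x \<ge> 2 \<or> degU (p x) \<ge> 2" "degU y \<ge> 2 \<or> degU (p y) \<ge> 2"
    unfolding low_pair_def by auto
  then have "\<not> neg_edge \<sigma> (p x) (p y) \<or> \<not> neg_edge \<sigma> (p x) y
      \<or> \<not> neg_edge \<sigma> x (p y) \<or> \<not> neg_edge \<sigma> x y"
    using no_neg_edge_between_partners[of x y] no_neg_edge_between_partners[of x "p y"]
      no_neg_edge_between_partners[of "p x" y] no_neg_edge_between_partners[of "p x" "p y"]
      x y px py \<open>p y \<noteq> x\<close> \<open>p y \<noteq> p x\<close> \<open>p x \<noteq> y\<close>
    by force
  then show ?thesis unfolding neg_between_def by auto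
qed

definition others :: "nat \<Rightarrow> nat set" where
  "others x = W - {x, p x}"

definition low_count :: int where
  "low_count = (\<Sum>x\<in>W. of_bool (low_pair x))"

lemma bij_partner_W: "bij_betw p W W"
  by (rule bij_betw_byWitness[where f' = p]) (auto simp: partner_in_W)

lemma others_partner: "x \<in> W \<Longrightarrow> others (p x) = others x"
  unfolding others_def using partner_in_W by auto

lemma bij_partner_others:
  assumes "x \<in> W"
  shows "bij_betw p (others x) (others x)"
proof -
  have "p y \<in> others x" if "y \<in> others x" for y
    using that partner_in_W[of y] partner_in_W(3)[OF assms] unfolding others_def by auto
  then show ?thesis
    by (intro bij_betw_byWitness[where f' = p]) (auto simp: others_def partner_in_W)
qed

lemma card_others: "x \<in> W \<Longrightarrow> int (card (others x)) = int (card W) - 2"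
proof -
  assume x: "x \<in> W"
  then have sub: "{x, p x} \<subseteq> W" and two: "card {x, p x} = 2"
    using partner_in_W[OF x] by auto
  then have "card W \<ge> 2" using card_mono[OF finite_W sub] by simp
  with sub two show ?thesis
    unfolding others_def using card_Diff_subset[OF _ sub] by simp
qed

lemma sum_neg_degree_lessThan:
  "(\<Sum>x<N. neg_degree \<sigma> {..<N} x) = (\<Sum>x\<in>W. neg_degree \<sigma> W x) + 2 * (\<Sum>x\<in>W. degU x)"
proof -
  have split: "neg_degree \<sigma> {..<N} x = neg_degree \<sigma> W x + degU x" for x
    unfolding neg_degree_def by (rule sum_lessThan_W_U)
  have "(\<Sum>x\<in>U. neg_degree \<sigma> W x + degU x) = (\<Sum>x\<in>U. neg_degree \<sigma> W x)"
    using no_neg_edge_in_U by (intro sum.cong) (auto simp: neg_degree_def)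
  also have "\<dots> = (\<Sum>x\<in>W. degU x)"
    by (rule sum_neg_degree_swap)
  finally show ?thesis
    unfolding split sum_lessThan_W_U[of "\<lambda>x. neg_degree \<sigma> W x + degU x"]
    by (simp add: sum.distrib)
qed

lemma neg_degree_W:
  assumes "x \<in> W"
  shows "neg_degree \<sigma> W x = 1 + neg_degree \<sigma> (others x) x"
proof -
  have sub: "{x, p x} \<subseteq> W" using partner_in_W[OF assms] assms by auto
  have "neg_degree \<sigma> W x = neg_degree \<sigma> (others x) x + neg_degree \<sigma> {x, p x} x"
    unfolding neg_degree_def others_def by (rule sum.subset_diff[OF sub finite_W])
  moreover have "neg_degree \<sigma> {x, p x} x = 1"
    using assms partner_in_W[OF assms] unfolding neg_degree_def neg_matched_def by simp
  ultimately show ?thesis by simp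
qed

lemma four_sum_neg_degree_others:
  "4 * (\<Sum>x\<in>W. neg_degree \<sigma> (others x) x) = (\<Sum>x\<in>W. \<Sum>y\<in>others x. neg_between x y)"
proof -
  define T where "T = (\<Sum>x\<in>W. neg_degree \<sigma> (others x) x)"
  have T_partner_y: "(\<Sum>x\<in>W. \<Sum>y\<in>others x. of_bool (neg_edge \<sigma> x (p y))) = T"
    unfolding T_def neg_degree_def
    by (intro sum.cong refl sum.reindex_bij_betw bij_partner_others)
  have T_partner_x: "(\<Sum>x\<in>W. \<Sum>y\<in>others x. of_bool (neg_edge \<sigma> (p x) y)) = T"
  proof -
    have "(\<Sum>x\<in>W. \<Sum>y\<in>others x. of_bool (neg_edge \<sigma> (p x) y))
        = (\<Sum>x\<in>W. neg_degree \<sigma> (others (p x)) (p x))"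
      unfolding neg_degree_def by (intro sum.cong refl) (simp add: others_partner)
    also have "\<dots> = T"
      unfolding T_def by (rule sum.reindex_bij_betw[OF bij_partner_W])
    finally show ?thesis .
  qed
  have T_partner_xy: "(\<Sum>x\<in>W. \<Sum>y\<in>others x. of_bool (neg_edge \<sigma> (p x) (p y))) = T"
    unfolding T_partner_x[symmetric]
    by (intro sum.cong refl sum.reindex_bij_betw bij_partner_others)
  show ?thesis
    using T_partner_y T_partner_x T_partner_xy
    unfolding T_def neg_between_def neg_degree_def by (simp add: sum.distrib)
qed

lemma sum_neg_between_le:
  assumes "x \<in> W"
  shows "(\<Sum>y\<in>others x. neg_between x y)
    \<le> (3 + of_bool (low_pair x)) * (int (card W) - 2) + low_count"
proof -
  have "(\<Sum>y\<in>others x. neg_between x y) \<le> (\<Sum>y\<in>others x. (3 + of_bool (low_pair x)) + of_bool (low_pair y))"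
    using neg_between_le[OF assms] by (intro sum_mono) (auto simp: others_def)
  also have "\<dots> = (3 + of_bool (low_pair x)) * int (card (others x)) + (\<Sum>y\<in>others x. of_bool (low_pair y))"
    by (simp add: sum.distrib del: sum_of_bool_eq)
  also have "(\<Sum>y\<in>others x. of_bool (low_pair y) :: int) \<le> low_count"
    unfolding low_count_def others_def by (rule sum_mono2[OF finite_W]) auto
  finally show ?thesis using card_others[OF assms] by simp
qed

lemma four_sum_neg_degree_W_le:
  "4 * (\<Sum>x\<in>W. neg_degree \<sigma> W x)
    \<le> 4 * int (card W) + (3 * int (card W) + low_count) * (int (card W) - 2) + int (card W) * low_count"
proof -
  have "4 * (\<Sum>x\<in>W. neg_degree \<sigma> W x) = 4 * int (card W) + 4 * (\<Sum>x\<in>W. neg_degree \<sigma> (others x) x)"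
    by (simp add: neg_degree_W sum.distrib sum_distrib_left)
  also have "\<dots> \<le> 4 * int (card W) + (\<Sum>x\<in>W. (3 + of_bool (low_pair x)) * (int (card W) - 2) + low_count)"
    unfolding four_sum_neg_degree_others by (simp add: sum_mono sum_neg_between_le)
  also have "(\<Sum>x\<in>W. (3 + of_bool (low_pair x)) * (int (card W) - 2) + low_count)
      = (\<Sum>x\<in>W. 3 + of_bool (low_pair x)) * (int (card W) - 2) + int (card W) * low_count"
    by (simp add: sum.distrib sum_distrib_right[symmetric])
  also have "(\<Sum>x\<in>W. 3 + of_bool (low_pair x)) = 3 * int (card W) + low_count"
    unfolding low_count_def by (simp add: sum.distrib del: sum_of_bool_eq)
  finally show ?thesis by simp
qed

lemma two_sum_degU_le:
  "2 * (\<Sum>x\<in>W. degU x) \<le> int (card W) * int (card U) - low_count * (int (card U) - 2)"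
proof -
  have "2 * (\<Sum>x\<in>W. degU x) = (\<Sum>x\<in>W. degU x + degU (p x))"
    using sum.reindex_bij_betw[OF bij_partner_W, of degU] by (simp add: sum.distrib)
  also have "\<dots> \<le> (\<Sum>x\<in>W. int (card U) - of_bool (low_pair x) * (int (card U) - 2))"
    by (intro sum_mono degU_pair_le)
  also have "\<dots> = int (card W) * int (card U) - low_count * (int (card U) - 2)"
    unfolding low_count_def by (simp add: sum_subtractf sum_distrib_right[symmetric] del: sum_of_bool_eq)
  finally show ?thesis .
qed

lemma four_sum_neg_degree_le:
  assumes "2 * card W + 6 \<le> 4 * card U"
  shows "4 * (\<Sum>x<N. neg_degree \<sigma> {..<N} x)
    \<le> 4 * int (card W) * int N - 2 * int (card W) - int (card W) ^ 2"
proof -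
  have "low_count \<ge> 0" unfolding low_count_def by (simp add: sum_nonneg)
  with assms have "low_count * (2 * int (card W) + 6 - 4 * int (card U)) \<le> 0"
    by (simp add: mult_nonneg_nonpos)
  moreover have "int N = int (card W) + int (card U)"
    using card_neg_matched_pos_matched[of \<sigma> N p] by simp
  ultimately show ?thesis
    using four_sum_neg_degree_W_le two_sum_degU_le
    unfolding sum_neg_degree_lessThan by (simp add: algebra_simps power2_eq_square)
qed

lemma four_sum_sign_ge:
  assumes signs: "\<forall>e\<in>complete_edges N. \<sigma> e \<in> {-1, 1}"
    and few: "6 * neg_count \<sigma> N p + 6 \<le> 4 * N"
  shows "4 * (\<Sum>e\<in>complete_edges N. \<sigma> e) \<ge> 2 * int N * (int N - 1)
    - 4 * int (neg_count \<sigma> N p) * int N + 2 * int (neg_count \<sigma> N p) + int (neg_count \<sigma> N p) ^ 2"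
proof -
  have "card W + card U = N" by (rule card_neg_matched_pos_matched)
  with few have "2 * card W + 6 \<le> 4 * card U" unfolding neg_count_def by linarith
  from four_sum_neg_degree_le[OF this] sum_complete_edges[OF signs]
  show ?thesis unfolding neg_count_def by linarith
qed

end

lemma locally_max_if_max_below:
  assumes "matching_involution N p" and "neg_count \<sigma> N p + 4 \<le> t"
    and "\<forall>q. matching_involution N q \<and> neg_count \<sigma> N q \<le> t \<longrightarrow> neg_count \<sigma> N q \<le> neg_count \<sigma> N p"
  shows "locally_max_matching \<sigma> N p"
  using assms by unfold_locales (auto simp: locally_max_def)

lemma ex_locally_max_below:
  assumes "matching_involution N p\<^sub>0" and "neg_count \<sigma> N p\<^sub>0 \<le> t"
  obtains p where "matching_involution N p" and "neg_count \<sigma> N p \<le> t"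
    and "neg_count \<sigma> N p + 4 \<le> t \<Longrightarrow> locally_max_matching \<sigma> N p"
proof -
  let ?Q = "\<lambda>q. matching_involution N q \<and> neg_count \<sigma> N q \<le> t"
  obtain p where "?Q p" "\<forall>q. ?Q q \<longrightarrow> neg_count \<sigma> N q \<le> neg_count \<sigma> N p"
    using ex_has_greatest_nat[of ?Q p\<^sub>0 "neg_count \<sigma> N" "N + 1"] assms neg_count_le
    by (metis le_imp_less_Suc Suc_eq_plus1)
  with locally_max_if_max_below that show ?thesis by blast
qed

lemma ex_locally_max_matching:
  assumes "even N"
  shows "\<exists>p. locally_max_matching \<sigma> N p"
proof -
  obtain p\<^sub>0 where "matching_involution N p\<^sub>0"
    using matching_involution_exists[OF assms] by blast
  moreover have "neg_count \<sigma> N p\<^sub>0 \<le> N + 4"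
    using neg_count_le[of \<sigma> N p\<^sub>0] by simp
  ultimately obtain p where "neg_count \<sigma> N p + 4 \<le> N + 4 \<Longrightarrow> locally_max_matching \<sigma> N p"
    using ex_locally_max_below by blast
  with neg_count_le[of \<sigma> N p] show ?thesis by auto
qed

lemma neg_count_gt_if_locally_max:
  assumes "locally_max_matching \<sigma> (4 * n) p" and "k \<ge> 2"
    and signs: "\<forall>e\<in>complete_edges (4 * n). \<sigma> e \<in> {-1, 1}"
    and sum_less: "(\<Sum>e\<in>complete_edges (4 * n). \<sigma> e)
      < int n * (int n - 1) + int k * (6 * int n - 1) + int k ^ 2"
  shows "2 * (int n - int k) < int (neg_count \<sigma> (4 * n) p)"
proof (rule ccontr)
  define w where "w = int (neg_count \<sigma> (4 * n) p)"
  define m where "m = int n - int k"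
  assume "\<not> ?thesis"
  then have "w \<le> 2 * m" unfolding w_def m_def by simp
  moreover have "w \<ge> 0" and "int k \<ge> 2" using \<open>k \<ge> 2\<close> unfolding w_def by simp_all
  ultimately have "6 * neg_count \<sigma> (4 * n) p + 6 \<le> 4 * (4 * n)"
    unfolding w_def m_def right_diff_distrib by linarith
  from locally_max_matching.four_sum_sign_ge[OF assms(1) signs this]
  have "4 * (\<Sum>e\<in>complete_edges (4 * n). \<sigma> e) \<ge> 2 * (4 * int n) * (4 * int n - 1)
      - 4 * w * (4 * int n) + 2 * w + w ^ 2"
    unfolding w_def by simp
  \<comment> \<open>the bound is decreasing in \<open>w\<close> on the relevant range, and equals the claim at \<open>w = 2 m\<close>\<close>
  moreover have "(2 * m - w) * (16 * int n - 2 - 2 * m - w) \<ge> 0"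
    using \<open>w \<le> 2 * m\<close> \<open>w \<ge> 0\<close> \<open>int k \<ge> 2\<close> unfolding m_def by simp
  ultimately show False
    using sum_less unfolding m_def by (simp add: algebra_simps power2_eq_square)
qed

lemma ex_neg_count_less:
  assumes "k \<ge> 2" and signs: "\<forall>e\<in>complete_edges (4 * n). \<sigma> e \<in> {-1, 1}"
    and "- (\<Sum>e\<in>complete_edges (4 * n). \<sigma> e)
      < int n * (int n - 1) + int k * (6 * int n - 1) + int k ^ 2"
  obtains p where "matching_involution (4 * n) p" and "neg_count \<sigma> (4 * n) p < 2 * n + 2 * k"
proof -
  define \<tau> where "\<tau> e = - \<sigma> e" for e
  obtain p where p: "locally_max_matching \<tau> (4 * n) p"
    using ex_locally_max_matching[of "4 * n"] by auto
  have "\<forall>e\<in>complete_edges (4 * n). \<tau> e \<in> {-1, 1}"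
    using signs unfolding \<tau>_def by auto
  moreover have "(\<Sum>e\<in>complete_edges (4 * n). \<tau> e) = - (\<Sum>e\<in>complete_edges (4 * n). \<sigma> e)"
    unfolding \<tau>_def by (rule sum_negf)
  ultimately have "2 * (int n - int k) < int (neg_count \<tau> (4 * n) p)"
    using neg_count_gt_if_locally_max[OF p \<open>k \<ge> 2\<close>] assms(3) by simp
  moreover have "matching_involution (4 * n) p"
    using p by (rule locally_max_matching.involution)
  ultimately show ?thesis
    using that neg_count_uminus[OF signs] unfolding \<tau>_def by fastforce
qed

lemma abs_sum_matching_of_le:
  assumes signs: "\<forall>e\<in>complete_edges (4 * n). \<sigma> e \<in> {-1, 1}"
    and p: "matching_involution (4 * n) p"
    and "2 * (int n - int k) < int (neg_count \<sigma> (4 * n) p)"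
    and "neg_count \<sigma> (4 * n) p < 2 * n + 2 * k"
  shows "\<bar>\<Sum>e\<in>matching_of (4 * n) p. \<sigma> e\<bar> \<le> 2 * int k - 2"
proof -
  obtain j where j: "neg_count \<sigma> (4 * n) p = 2 * j"
    using even_neg_count[OF p] by blast
  with assms(3,4) have "int n - int k < int j" "j < n + k" by simp_all
  moreover have "(\<Sum>e\<in>matching_of (4 * n) p. \<sigma> e) = 2 * int n - 2 * int j"
    using sum_matching_of_sign[OF signs p] j by simp
  ultimately show ?thesis by simp
qed

theorem theorem3:
  fixes n k :: nat and \<sigma> :: "nat set \<Rightarrow> int"
  assumes "n \<ge> 1" and "k \<ge> 2"
    and "\<forall>e\<in>complete_edges (4*n). \<sigma> e \<in> {-1, 1}"
    and "\<bar>\<Sum>e\<in>complete_edges (4*n). \<sigma> e\<bar>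
           < int n * (int n - 1) + int k * (6 * int n - 1) + int k ^ 2"
  shows "\<exists>M. perfect_matching (4*n) M \<and> \<bar>\<Sum>e\<in>M. \<sigma> e\<bar> \<le> 2 * int k - 2"
proof -
  have sum_less: "(\<Sum>e\<in>complete_edges (4 * n). \<sigma> e)
      < int n * (int n - 1) + int k * (6 * int n - 1) + int k ^ 2"
    and "- (\<Sum>e\<in>complete_edges (4 * n). \<sigma> e)
      < int n * (int n - 1) + int k * (6 * int n - 1) + int k ^ 2"
    using assms(4) by linarith+
  then obtain p\<^sub>1 where p\<^sub>1: "matching_involution (4 * n) p\<^sub>1"
    and "neg_count \<sigma> (4 * n) p\<^sub>1 < 2 * n + 2 * k"
    using ex_neg_count_less[OF assms(2,3)] by blast
  then have "neg_count \<sigma> (4 * n) p\<^sub>1 \<le> 2 * n + 2 * k - 1" by simp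
  then obtain p where p: "matching_involution (4 * n) p"
    and p_le: "neg_count \<sigma> (4 * n) p \<le> 2 * n + 2 * k - 1"
    and p_max: "neg_count \<sigma> (4 * n) p + 4 \<le> 2 * n + 2 * k - 1 \<Longrightarrow> locally_max_matching \<sigma> (4 * n) p"
    using ex_locally_max_below[OF p\<^sub>1] by blast
  have "2 * (int n - int k) < int (neg_count \<sigma> (4 * n) p)"
  proof (rule ccontr)
    assume "\<not> ?thesis"
    with assms(2) p_max have "locally_max_matching \<sigma> (4 * n) p" by simp
    from neg_count_gt_if_locally_max[OF this assms(2,3) sum_less] \<open>\<not> ?thesis\<close> show False
      by simp
  qed
  moreover have "neg_count \<sigma> (4 * n) p < 2 * n + 2 * k"
    using p_le assms(2) by simp
  ultimately show ?thesis
    using abs_sum_matching_of_le[OF assms(3) p] perfect_matching_matching_of[OF p] by blast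
qed

end
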